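(* Let $\mathcal H$ be a graded connected Hopf algebra over a field $\Bbbk$ and let $\varphi,\varphi',\psi,\psi'$ be characters on $\mathcal H$. Suppose that either $\psi^{-1}\varphi=(\psi')^{-1}\varphi'$ or $\varphi\psi^{-1}=\varphi'(\psi')^{-1}$. Then $S(\varphi,\psi)=S(\varphi',\psi')$ and $I(\varphi,\psi)=I(\varphi',\psi')$.
   Context: $\mathcal H=\bigoplus_{n\ge0}\mathcal H_n$ is graded connected with finite-dimensional components; characters are algebra morphisms to $\Bbbk$, multiplied by convolution $\varphi\psi=m_\Bbbk\circ(\varphi\otimes\psi)\circ\Delta$, with inverse $\varphi^{-1}=\varphi\circ S$. For a linear functional $\varphi$, $\varphi_n=\varphi|_{\mathcal H_n}$. $S(\varphi,\psi)$ is the largest graded subcoalgebra of $\mathcal H$ on which $\varphi=\psi$; $I(\varphi,\psi)$ is the ideal of the graded dual $\mathcal H^*=\bigoplus_n(\mathcal H_n)^*$ generated by $\varphi_n-\psi_n$, $n\ge0$. *)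

theory Defs
  imports Complex_Main
begin

text \<open>
  The coproduct is given in Sweedler form: cop x is a
  finite list of pairs (a_i, b_i) representing the tensor sum_i a_i (x) b_i.
  Two such lists represent the same tensor iff all functionals f (x) g
  (f, g linear) agree on them (pure tensors of functionals separate points of
  a tensor product of vector spaces).
\<close>

record ('k, 'h) hopf =
  scl :: "'k \<Rightarrow> 'h \<Rightarrow> 'h"
  mul :: "'h \<Rightarrow> 'h \<Rightarrow> 'h"
  one :: "'h"
  cop :: "'h \<Rightarrow> ('h \<times> 'h) list"
  cou :: "'h \<Rightarrow> 'k"
  ant :: "'h \<Rightarrow> 'h"
  grd :: "nat \<Rightarrow> 'h set"

definition lin_fun :: "('k::field, 'h::ab_group_add) hopf \<Rightarrow> ('h \<Rightarrow> 'k) \<Rightarrow> bool" where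
  "lin_fun HA f \<longleftrightarrow> (\<forall>x y. f (x + y) = f x + f y) \<and> (\<forall>c x. f (scl HA c x) = c * f x)"

definition teval :: "('h \<Rightarrow> 'k::field) \<Rightarrow> ('h \<Rightarrow> 'k) \<Rightarrow> ('h \<times> 'h) list \<Rightarrow> 'k" where
  "teval f g xs = (\<Sum>(a, b)\<leftarrow>xs. f a * g b)"

definition teq :: "('k::field, 'h::ab_group_add) hopf \<Rightarrow> ('h \<times> 'h) list \<Rightarrow> ('h \<times> 'h) list \<Rightarrow> bool" where
  "teq HA xs ys \<longleftrightarrow> (\<forall>f g. lin_fun HA f \<longrightarrow> lin_fun HA g \<longrightarrow> teval f g xs = teval f g ys)"

definition graded_connected_hopf :: "('k::field, 'h::ab_group_add) hopf \<Rightarrow> bool" where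
  "graded_connected_hopf HA \<longleftrightarrow>
     \<comment> \<open>vector space\<close>
     vector_space (scl HA)
     \<comment> \<open>associative unital algebra\<close>
   \<and> (\<forall>x y z. mul HA (x + y) z = mul HA x z + mul HA y z)
   \<and> (\<forall>x y z. mul HA x (y + z) = mul HA x y + mul HA x z)
   \<and> (\<forall>c x y. mul HA (scl HA c x) y = scl HA c (mul HA x y))
   \<and> (\<forall>c x y. mul HA x (scl HA c y) = scl HA c (mul HA x y))
   \<and> (\<forall>x y z. mul HA (mul HA x y) z = mul HA x (mul HA y z))
   \<and> (\<forall>x. mul HA (one HA) x = x \<and> mul HA x (one HA) = x)
     \<comment> \<open>coassociative counital coalgebra\<close>
   \<and> (\<forall>x y. teq HA (cop HA (x + y)) (cop HA x @ cop HA y))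
   \<and> (\<forall>c x. teq HA (cop HA (scl HA c x)) (map (\<lambda>(a, b). (scl HA c a, b)) (cop HA x)))
   \<and> (\<forall>x f g h. lin_fun HA f \<longrightarrow> lin_fun HA g \<longrightarrow> lin_fun HA h \<longrightarrow>
        (\<Sum>(a, b)\<leftarrow>cop HA x. teval f g (cop HA a) * h b)
      = (\<Sum>(a, b)\<leftarrow>cop HA x. f a * teval g h (cop HA b)))
   \<and> lin_fun HA (cou HA)
   \<and> (\<forall>x. (\<Sum>(a, b)\<leftarrow>cop HA x. scl HA (cou HA a) b) = x)
   \<and> (\<forall>x. (\<Sum>(a, b)\<leftarrow>cop HA x. scl HA (cou HA b) a) = x)
     \<comment> \<open>bialgebra compatibility\<close>
   \<and> (\<forall>x y. teq HA (cop HA (mul HA x y))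
        (concat (map (\<lambda>(a, b). map (\<lambda>(c, d). (mul HA a c, mul HA b d)) (cop HA y)) (cop HA x))))
   \<and> teq HA (cop HA (one HA)) [(one HA, one HA)]
   \<and> (\<forall>x y. cou HA (mul HA x y) = cou HA x * cou HA y)
   \<and> cou HA (one HA) = 1
     \<comment> \<open>antipode\<close>
   \<and> (\<forall>x y. ant HA (x + y) = ant HA x + ant HA y)
   \<and> (\<forall>c x. ant HA (scl HA c x) = scl HA c (ant HA x))
   \<and> (\<forall>x. (\<Sum>(a, b)\<leftarrow>cop HA x. mul HA (ant HA a) b) = scl HA (cou HA x) (one HA))
   \<and> (\<forall>x. (\<Sum>(a, b)\<leftarrow>cop HA x. mul HA a (ant HA b)) = scl HA (cou HA x) (one HA))
     \<comment> \<open>grading: H = direct sum of finite-dimensional subspaces H_n\<close>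
   \<and> (\<forall>n. module.subspace (scl HA) (grd HA n))
   \<and> (\<forall>n. \<exists>B. finite B \<and> grd HA n = module.span (scl HA) B)
   \<and> (\<forall>x. \<exists>xs N. (\<forall>m. xs m \<in> grd HA m) \<and> x = (\<Sum>m<N. xs m))
   \<and> (\<forall>xs N. (\<forall>m. xs m \<in> grd HA m) \<longrightarrow> (\<Sum>m<N. xs m) = 0 \<longrightarrow> (\<forall>m<N. xs m = 0))
     \<comment> \<open>graded algebra and graded coalgebra\<close>
   \<and> (\<forall>i j x y. x \<in> grd HA i \<longrightarrow> y \<in> grd HA j \<longrightarrow> mul HA x y \<in> grd HA (i + j))
   \<and> one HA \<in> grd HA 0
   \<and> (\<forall>n x. x \<in> grd HA n \<longrightarrow> (\<exists>ys. teq HA (cop HA x) ys \<and>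
          (\<forall>(a, b)\<in>set ys. \<exists>i j. i + j = n \<and> a \<in> grd HA i \<and> b \<in> grd HA j)))
   \<and> (\<forall>n x. 0 < n \<longrightarrow> x \<in> grd HA n \<longrightarrow> cou HA x = 0)
     \<comment> \<open>connected\<close>
   \<and> grd HA 0 = module.span (scl HA) {one HA}"

definition hproj :: "('k::field, 'h::ab_group_add) hopf \<Rightarrow> nat \<Rightarrow> 'h \<Rightarrow> 'h" where
  "hproj HA n x = (THE y. \<exists>xs N. (\<forall>m. xs m \<in> grd HA m) \<and> (\<forall>m\<ge>N. xs m = 0)
                         \<and> x = (\<Sum>m<N. xs m) \<and> y = xs n)"

text \<open>phi_n = phi restricted to H_n, extended by zero to the other components.\<close>
definition comp :: "('k::field, 'h::ab_group_add) hopf \<Rightarrow> ('h \<Rightarrow> 'k) \<Rightarrow> nat \<Rightarrow> 'h \<Rightarrow> 'k" where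
  "comp HA f n = (\<lambda>x. f (hproj HA n x))"

definition conv :: "('k::field, 'h::ab_group_add) hopf \<Rightarrow> ('h \<Rightarrow> 'k) \<Rightarrow> ('h \<Rightarrow> 'k) \<Rightarrow> 'h \<Rightarrow> 'k" where
  "conv HA f g = (\<lambda>x. \<Sum>(a, b)\<leftarrow>cop HA x. f a * g b)"

definition character :: "('k::field, 'h::ab_group_add) hopf \<Rightarrow> ('h \<Rightarrow> 'k) \<Rightarrow> bool" where
  "character HA f \<longleftrightarrow> lin_fun HA f \<and> (\<forall>x y. f (mul HA x y) = f x * f y) \<and> f (one HA) = 1"

definition char_inv :: "('k::field, 'h::ab_group_add) hopf \<Rightarrow> ('h \<Rightarrow> 'k) \<Rightarrow> 'h \<Rightarrow> 'k" where
  "char_inv HA f = f \<circ> ant HA"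

text \<open>Graded dual: linear functionals vanishing on all but finitely many H_n,
  i.e. the direct sum of the (H_n)^*.\<close>
definition gdual :: "('k::field, 'h::ab_group_add) hopf \<Rightarrow> ('h \<Rightarrow> 'k) set" where
  "gdual HA = {f. lin_fun HA f \<and> (\<exists>N. \<forall>n\<ge>N. \<forall>x\<in>grd HA n. f x = 0)}"

definition dual_ideal :: "('k::field, 'h::ab_group_add) hopf \<Rightarrow> ('h \<Rightarrow> 'k) set \<Rightarrow> ('h \<Rightarrow> 'k) set" where
  "dual_ideal HA G = \<Inter>{J. J \<subseteq> gdual HA \<and> G \<subseteq> J \<and> (\<lambda>x. 0) \<in> J
      \<and> (\<forall>f\<in>J. \<forall>g\<in>J. (\<lambda>x. f x + g x) \<in> J)
      \<and> (\<forall>c. \<forall>f\<in>J. (\<lambda>x. c * f x) \<in> J)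
      \<and> (\<forall>a\<in>gdual HA. \<forall>f\<in>J. conv HA a f \<in> J \<and> conv HA f a \<in> J)}"

definition Iideal :: "('k::field, 'h::ab_group_add) hopf \<Rightarrow> ('h \<Rightarrow> 'k) \<Rightarrow> ('h \<Rightarrow> 'k) \<Rightarrow> ('h \<Rightarrow> 'k) set" where
  "Iideal HA f g = dual_ideal HA {(\<lambda>x. comp HA f n x - comp HA g n x) | n. True}"

definition graded_subcoalg :: "('k::field, 'h::ab_group_add) hopf \<Rightarrow> 'h set \<Rightarrow> bool" where
  "graded_subcoalg HA C \<longleftrightarrow> module.subspace (scl HA) C
     \<and> (\<forall>x\<in>C. \<forall>n. hproj HA n x \<in> C)
     \<and> (\<forall>x\<in>C. \<exists>ys. teq HA (cop HA x) ys \<and> set ys \<subseteq> C \<times> C)"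

definition Ssub :: "('k::field, 'h::ab_group_add) hopf \<Rightarrow> ('h \<Rightarrow> 'k) \<Rightarrow> ('h \<Rightarrow> 'k) \<Rightarrow> 'h set" where
  "Ssub HA f g = (GREATEST C. graded_subcoalg HA C \<and> (\<forall>x\<in>C. f x = g x))"

end

theory Submission
  imports Defs
begin

text \<open>
  Characters form a group under convolution, with the counit as unit and \<psi> \<circ> S as the inverse
  of \<psi>. The value of a convolution at a point of a subcoalgebra C only depends on the values of
  its factors on C, so \<phi> = \<psi> on C iff \<psi>\<inverse>\<phi> = \<epsilon> on C iff \<phi>\<psi>\<inverse> = \<epsilon> on C; hence S(\<phi>, \<psi>)
  only depends on \<psi>\<inverse>\<phi>, and also only on \<phi>\<psi>\<inverse>. For the ideals, \<psi>\<inverse>\<phi> = \<psi>'\<inverse>\<phi>' gives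
  \<phi> - \<psi> = (\<psi>\<psi>'\<inverse>)(\<phi>' - \<psi>'), and since convolution respects the grading,
  (f g)_n = \<Sum>_{i \<le> n} f_i g_{n-i}, every generator (\<phi> - \<psi>)_n of I(\<phi>, \<psi>) lies in I(\<phi>', \<psi>');
  by symmetry the ideals coincide.
\<close>

lemma sum_list_pair_cong:
  "(\<And>a b. (a, b) \<in> set xs \<Longrightarrow> F a b = G a b) \<Longrightarrow> (\<Sum>(a, b)\<leftarrow>xs. F a b) = (\<Sum>(a, b)\<leftarrow>xs. G a b)"
  by (induction xs) auto

lemma sum_sum_list_pair_swap:
  "(\<Sum>i\<in>A. \<Sum>(a, b)\<leftarrow>xs. F i a b) = (\<Sum>(a, b)\<leftarrow>xs. \<Sum>i\<in>A. (F i a b :: 'a::comm_monoid_add))"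
  by (induction xs) (auto simp: sum.distrib)

lemma sum_list_pair_diff:
  "(\<Sum>(a, b)\<leftarrow>xs. F a b - G a b) = (\<Sum>(a, b)\<leftarrow>xs. F a b) - (\<Sum>(a, b)\<leftarrow>xs. (G a b :: 'a::ab_group_add))"
  by (induction xs) auto

lemma sum_lessThan_extend:
  assumes "\<And>m. N \<le> m \<Longrightarrow> f m = 0" and "N \<le> (K::nat)"
  shows "(\<Sum>m<K. f m) = (\<Sum>m<N. (f m :: 'a::comm_monoid_add))"
  using assms by (intro sum.mono_neutral_right) auto

lemma lin_fun_add: "lin_fun HA f \<Longrightarrow> f (x + y) = f x + f y"
  by (simp add: lin_fun_def)

lemma lin_fun_scl: "lin_fun HA f \<Longrightarrow> f (scl HA c x) = c * f x"
  by (simp add: lin_fun_def)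

lemma lin_fun_zero: "lin_fun HA f \<Longrightarrow> f 0 = 0"
  using lin_fun_add[of HA f 0 0] by (metis add.right_neutral add_left_cancel)

lemma lin_fun_sum_list:
  "lin_fun HA f \<Longrightarrow> f (\<Sum>(a, b)\<leftarrow>xs. h a b) = (\<Sum>(a, b)\<leftarrow>xs. f (h a b))"
  by (induction xs) (auto simp: lin_fun_zero lin_fun_add)

lemma lin_fun_apply_sum: "lin_fun HA f \<Longrightarrow> f (sum h A) = (\<Sum>i\<in>A. f (h i))"
  by (induction A rule: infinite_finite_induct) (auto simp: lin_fun_zero lin_fun_add)

lemma lin_fun_diff: "lin_fun HA f \<Longrightarrow> lin_fun HA g \<Longrightarrow> lin_fun HA (\<lambda>x. f x - g x)"
  by (simp add: lin_fun_def algebra_simps)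

lemma lin_fun_sum: "(\<And>i. i \<in> A \<Longrightarrow> lin_fun HA (F i)) \<Longrightarrow> lin_fun HA (\<lambda>x. \<Sum>i\<in>A. F i x)"
  by (simp add: lin_fun_def sum.distrib sum_distrib_left)

lemma lin_fun_if_character: "character HA f \<Longrightarrow> lin_fun HA f"
  by (simp add: character_def)

lemma teval_eq_if_teq:
  "teq HA xs ys \<Longrightarrow> lin_fun HA f \<Longrightarrow> lin_fun HA g \<Longrightarrow> teval f g xs = teval f g ys"
  by (simp add: teq_def)

lemma conv_eq_teval: "conv HA f g x = teval f g (cop HA x)"
  by (simp add: conv_def teval_def)

lemma conv_diff_left: "conv HA (\<lambda>x. f x - g x) h = (\<lambda>x. conv HA f h x - conv HA g h x)"
  by (simp add: conv_def left_diff_distrib sum_list_pair_diff)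

lemma conv_diff_right: "conv HA f (\<lambda>x. g x - h x) = (\<lambda>x. conv HA f g x - conv HA f h x)"
  by (simp add: conv_def right_diff_distrib sum_list_pair_diff)

definition cop_closed :: "('k::field, 'h::ab_group_add) hopf \<Rightarrow> 'h set \<Rightarrow> bool" where
  "cop_closed HA C \<longleftrightarrow> (\<forall>x\<in>C. \<exists>ys. teq HA (cop HA x) ys \<and> set ys \<subseteq> C \<times> C)"

lemma cop_closed_if_graded_subcoalg: "graded_subcoalg HA C \<Longrightarrow> cop_closed HA C"
  by (simp add: graded_subcoalg_def cop_closed_def)

lemma Ssub_cong:
  assumes "\<And>C. graded_subcoalg HA C \<Longrightarrow> (\<forall>x\<in>C. f x = g x) \<longleftrightarrow> (\<forall>x\<in>C. f' x = g' x)"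
  shows "Ssub HA f g = Ssub HA f' g'"
proof -
  have "graded_subcoalg HA C \<and> (\<forall>x\<in>C. f x = g x) \<longleftrightarrow> graded_subcoalg HA C \<and> (\<forall>x\<in>C. f' x = g' x)" for C
    using assms[of C] by blast
  then show ?thesis by (simp add: Ssub_def)
qed

lemma comp_diff: "comp HA (\<lambda>x. f x - g x) n = (\<lambda>x. comp HA f n x - comp HA g n x)"
  by (simp add: comp_def)

lemma Iideal_eq_dual_ideal_comp: "Iideal HA f g = dual_ideal HA (range (comp HA (\<lambda>x. f x - g x)))"
  by (simp add: Iideal_def comp_diff full_SetCompr_eq)

lemma dual_ideal_generator: "g \<in> G \<Longrightarrow> g \<in> dual_ideal HA G"
  by (simp add: dual_ideal_def subset_iff)

lemma dual_ideal_subset: "G \<subseteq> dual_ideal HA G' \<Longrightarrow> dual_ideal HA G \<subseteq> dual_ideal HA G'"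
  unfolding dual_ideal_def by (rule Inter_anti_mono) blast

lemma dual_ideal_zero: "(\<lambda>x. 0) \<in> dual_ideal HA G"
  by (simp add: dual_ideal_def)

lemma dual_ideal_add: "f \<in> dual_ideal HA G \<Longrightarrow> g \<in> dual_ideal HA G \<Longrightarrow> (\<lambda>x. f x + g x) \<in> dual_ideal HA G"
  unfolding dual_ideal_def by blast

lemma dual_ideal_sum:
  "finite A \<Longrightarrow> (\<And>i. i \<in> A \<Longrightarrow> F i \<in> dual_ideal HA G) \<Longrightarrow> (\<lambda>x. \<Sum>i\<in>A. F i x) \<in> dual_ideal HA G"
proof (induction A rule: finite_induct)
  case empty
  then show ?case by (simp add: dual_ideal_zero)
next
  case (insert a A)
  then show ?case by (simp add: dual_ideal_add)
qed

lemma dual_ideal_conv_left: "a \<in> gdual HA \<Longrightarrow> f \<in> dual_ideal HA G \<Longrightarrow> conv HA a f \<in> dual_ideal HA G"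
  unfolding dual_ideal_def by blast

lemma dual_ideal_conv_right: "a \<in> gdual HA \<Longrightarrow> f \<in> dual_ideal HA G \<Longrightarrow> conv HA f a \<in> dual_ideal HA G"
  unfolding dual_ideal_def by blast

locale hopf_coalgebra =
  fixes HA :: "('k::field, 'h::ab_group_add) hopf"
  assumes cop_add: "teq HA (cop HA (x + y)) (cop HA x @ cop HA y)"
    and cop_scl: "teq HA (cop HA (scl HA c x)) (map (\<lambda>(a, b). (scl HA c a, b)) (cop HA x))"
    and coassoc: "lin_fun HA f \<Longrightarrow> lin_fun HA g \<Longrightarrow> lin_fun HA h \<Longrightarrow>
        (\<Sum>(a, b)\<leftarrow>cop HA x. teval f g (cop HA a) * h b) = (\<Sum>(a, b)\<leftarrow>cop HA x. f a * teval g h (cop HA b))"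
    and lin_fun_cou: "lin_fun HA (cou HA)"
    and cou_cop_left: "(\<Sum>(a, b)\<leftarrow>cop HA x. scl HA (cou HA a) b) = x"
    and cou_cop_right: "(\<Sum>(a, b)\<leftarrow>cop HA x. scl HA (cou HA b) a) = x"
    and ant_add: "ant HA (x + y) = ant HA x + ant HA y"
    and ant_scl: "ant HA (scl HA c x) = scl HA c (ant HA x)"
    and ant_cop_left: "(\<Sum>(a, b)\<leftarrow>cop HA x. mul HA (ant HA a) b) = scl HA (cou HA x) (one HA)"
    and ant_cop_right: "(\<Sum>(a, b)\<leftarrow>cop HA x. mul HA a (ant HA b)) = scl HA (cou HA x) (one HA)"
begin

lemma lin_fun_conv:
  assumes f: "lin_fun HA f" and g: "lin_fun HA g"
  shows "lin_fun HA (conv HA f g)"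
proof -
  have "teval f g (map (\<lambda>(a, b). (scl HA c a, b)) xs) = c * teval f g xs" for c xs
    by (induction xs) (auto simp: teval_def lin_fun_scl[OF f] algebra_simps)
  then show ?thesis
    unfolding lin_fun_def conv_eq_teval
    using teval_eq_if_teq[OF cop_add f g] teval_eq_if_teq[OF cop_scl f g]
    by (simp add: teval_def)
qed

lemma lin_fun_char_inv: "lin_fun HA f \<Longrightarrow> lin_fun HA (char_inv HA f)"
  by (simp add: lin_fun_def char_inv_def ant_add ant_scl)

lemma conv_assoc:
  "lin_fun HA f \<Longrightarrow> lin_fun HA g \<Longrightarrow> lin_fun HA h \<Longrightarrow> conv HA (conv HA f g) h = conv HA f (conv HA g h)"
  using coassoc by (auto simp: conv_def teval_def)

lemma conv_cou_left:
  assumes f: "lin_fun HA f"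
  shows "conv HA (cou HA) f = f"
proof
  fix x
  have "f x = f (\<Sum>(a, b)\<leftarrow>cop HA x. scl HA (cou HA a) b)" by (simp add: cou_cop_left)
  also have "\<dots> = conv HA (cou HA) f x"
    by (simp add: lin_fun_sum_list[OF f] lin_fun_scl[OF f] conv_def)
  finally show "conv HA (cou HA) f x = f x" ..
qed

lemma conv_cou_right:
  assumes f: "lin_fun HA f"
  shows "conv HA f (cou HA) = f"
proof
  fix x
  have "f x = f (\<Sum>(a, b)\<leftarrow>cop HA x. scl HA (cou HA b) a)" by (simp add: cou_cop_right)
  also have "\<dots> = conv HA f (cou HA) x"
    by (simp add: lin_fun_sum_list[OF f] lin_fun_scl[OF f] conv_def mult.commute)
  finally show "conv HA f (cou HA) x = f x" ..
qed

lemma conv_char_inv_left: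
  assumes "character HA f"
  shows "conv HA (char_inv HA f) f = cou HA"
proof
  fix x
  have lin: "lin_fun HA f" using assms by (rule lin_fun_if_character)
  have "conv HA (char_inv HA f) f x = f (\<Sum>(a, b)\<leftarrow>cop HA x. mul HA (ant HA a) b)"
    using assms by (simp add: lin_fun_sum_list[OF lin] conv_def char_inv_def character_def)
  then show "conv HA (char_inv HA f) f x = cou HA x"
    using assms by (simp add: ant_cop_left lin_fun_scl[OF lin] character_def)
qed

lemma conv_char_inv_right:
  assumes "character HA f"
  shows "conv HA f (char_inv HA f) = cou HA"
proof
  fix x
  have lin: "lin_fun HA f" using assms by (rule lin_fun_if_character)
  have "conv HA f (char_inv HA f) x = f (\<Sum>(a, b)\<leftarrow>cop HA x. mul HA a (ant HA b))"
    using assms by (simp add: lin_fun_sum_list[OF lin] conv_def char_inv_def character_def)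
  then show "conv HA f (char_inv HA f) x = cou HA x"
    using assms by (simp add: ant_cop_right lin_fun_scl[OF lin] character_def)
qed

lemma conv_cong_on_cop_closed:
  assumes C: "cop_closed HA C" and x: "x \<in> C"
    and lin: "lin_fun HA f" "lin_fun HA f'" "lin_fun HA g" "lin_fun HA g'"
    and eq: "\<forall>y\<in>C. f y = f' y" "\<forall>y\<in>C. g y = g' y"
  shows "conv HA f g x = conv HA f' g' x"
proof -
  obtain ys where t: "teq HA (cop HA x) ys" and ys: "set ys \<subseteq> C \<times> C"
    using C x by (auto simp: cop_closed_def)
  have "conv HA f g x = teval f g ys"
    by (simp add: conv_eq_teval teval_eq_if_teq[OF t lin(1,3)])
  also have "\<dots> = teval f' g' ys"
    unfolding teval_def by (rule sum_list_pair_cong) (use ys eq in auto)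
  also have "\<dots> = conv HA f' g' x"
    by (simp add: conv_eq_teval teval_eq_if_teq[OF t lin(2,4)])
  finally show ?thesis .
qed

lemma eq_on_cop_closed_iff_left_quotient:
  assumes C: "cop_closed HA C" and f: "lin_fun HA f" and g: "character HA g"
  shows "(\<forall>x\<in>C. f x = g x) \<longleftrightarrow> (\<forall>x\<in>C. conv HA (char_inv HA g) f x = cou HA x)"
proof -
  have lg: "lin_fun HA g" and lg': "lin_fun HA (char_inv HA g)"
    using g by (simp_all add: lin_fun_if_character lin_fun_char_inv)
  have lq: "lin_fun HA (conv HA (char_inv HA g) f)" using lg' f by (rule lin_fun_conv)
  show ?thesis
  proof
    assume "\<forall>x\<in>C. f x = g x"
    then show "\<forall>x\<in>C. conv HA (char_inv HA g) f x = cou HA x"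
      using conv_cong_on_cop_closed[OF C _ lg' lg' f lg] by (simp add: conv_char_inv_left[OF g])
  next
    assume "\<forall>x\<in>C. conv HA (char_inv HA g) f x = cou HA x"
    moreover have "f = conv HA g (conv HA (char_inv HA g) f)"
      by (simp add: conv_assoc[OF lg lg' f, symmetric] conv_char_inv_right[OF g] conv_cou_left[OF f])
    ultimately show "\<forall>x\<in>C. f x = g x"
      using conv_cong_on_cop_closed[OF C _ lg lg lq lin_fun_cou] by (metis conv_cou_right[OF lg])
  qed
qed

lemma eq_on_cop_closed_iff_right_quotient:
  assumes C: "cop_closed HA C" and f: "lin_fun HA f" and g: "character HA g"
  shows "(\<forall>x\<in>C. f x = g x) \<longleftrightarrow> (\<forall>x\<in>C. conv HA f (char_inv HA g) x = cou HA x)"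
proof -
  have lg: "lin_fun HA g" and lg': "lin_fun HA (char_inv HA g)"
    using g by (simp_all add: lin_fun_if_character lin_fun_char_inv)
  have lq: "lin_fun HA (conv HA f (char_inv HA g))" using f lg' by (rule lin_fun_conv)
  show ?thesis
  proof
    assume "\<forall>x\<in>C. f x = g x"
    then show "\<forall>x\<in>C. conv HA f (char_inv HA g) x = cou HA x"
      using conv_cong_on_cop_closed[OF C _ f lg lg' lg'] by (simp add: conv_char_inv_right[OF g])
  next
    assume "\<forall>x\<in>C. conv HA f (char_inv HA g) x = cou HA x"
    moreover have "f = conv HA (conv HA f (char_inv HA g)) g"
      by (simp add: conv_assoc[OF f lg' lg] conv_char_inv_left[OF g] conv_cou_right[OF f])
    ultimately show "\<forall>x\<in>C. f x = g x"
      using conv_cong_on_cop_closed[OF C _ lq lin_fun_cou lg lg] by (metis conv_cou_left[OF lg])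
  qed
qed

lemma diff_eq_conv_diff_if_left_quotients_eq:
  assumes f: "lin_fun HA f" and f': "lin_fun HA f'" and g: "character HA g" and g': "character HA g'"
    and quot: "conv HA (char_inv HA g) f = conv HA (char_inv HA g') f'"
  shows "(\<lambda>x. f x - g x) = conv HA (conv HA g (char_inv HA g')) (\<lambda>x. f' x - g' x)"
proof -
  have lg: "lin_fun HA g" "lin_fun HA (char_inv HA g)" and lg': "lin_fun HA g'" "lin_fun HA (char_inv HA g')"
    using g g' by (simp_all add: lin_fun_if_character lin_fun_char_inv)
  have "conv HA (conv HA g (char_inv HA g')) f' = f"
    by (simp add: conv_assoc[OF lg(1) lg'(2) f'] quot[symmetric] conv_assoc[OF lg f, symmetric]
        conv_char_inv_right[OF g] conv_cou_left[OF f])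
  moreover have "conv HA (conv HA g (char_inv HA g')) g' = g"
    by (simp add: conv_assoc[OF lg(1) lg'(2) lg'(1)] conv_char_inv_left[OF g'] conv_cou_right[OF lg(1)])
  ultimately show ?thesis by (simp add: conv_diff_right)
qed

lemma diff_eq_conv_diff_if_right_quotients_eq:
  assumes f: "lin_fun HA f" and f': "lin_fun HA f'" and g: "character HA g" and g': "character HA g'"
    and quot: "conv HA f (char_inv HA g) = conv HA f' (char_inv HA g')"
  shows "(\<lambda>x. f x - g x) = conv HA (\<lambda>x. f' x - g' x) (conv HA (char_inv HA g') g)"
proof -
  have lg: "lin_fun HA g" "lin_fun HA (char_inv HA g)" and lg': "lin_fun HA g'" "lin_fun HA (char_inv HA g')"
    using g g' by (simp_all add: lin_fun_if_character lin_fun_char_inv)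
  have "conv HA f' (conv HA (char_inv HA g') g) = f"
    by (simp add: conv_assoc[OF f' lg'(2) lg(1), symmetric] quot[symmetric] conv_assoc[OF f lg(2) lg(1)]
        conv_char_inv_left[OF g] conv_cou_right[OF f])
  moreover have "conv HA g' (conv HA (char_inv HA g') g) = g"
    by (simp add: conv_assoc[OF lg'(1) lg'(2) lg(1), symmetric] conv_char_inv_right[OF g'] conv_cou_left[OF lg(1)])
  ultimately show ?thesis by (simp add: conv_diff_left)
qed

lemma Ssub_eq_if_quotients_eq:
  assumes f: "lin_fun HA f" and f': "lin_fun HA f'" and g: "character HA g" and g': "character HA g'"
    and quot: "conv HA (char_inv HA g) f = conv HA (char_inv HA g') f'
      \<or> conv HA f (char_inv HA g) = conv HA f' (char_inv HA g')"
  shows "Ssub HA f g = Ssub HA f' g'"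
proof (rule Ssub_cong)
  fix C assume "graded_subcoalg HA C"
  then have C: "cop_closed HA C" by (rule cop_closed_if_graded_subcoalg)
  from quot show "(\<forall>x\<in>C. f x = g x) \<longleftrightarrow> (\<forall>x\<in>C. f' x = g' x)"
    using eq_on_cop_closed_iff_left_quotient[OF C f g] eq_on_cop_closed_iff_left_quotient[OF C f' g']
      eq_on_cop_closed_iff_right_quotient[OF C f g] eq_on_cop_closed_iff_right_quotient[OF C f' g']
    by auto
qed

end

locale graded_hopf_coalgebra = hopf_coalgebra HA + vector_space "scl HA"
  for HA :: "('k::field, 'h::ab_group_add) hopf" +
  assumes subspace_grd: "subspace (grd HA n)"
    and grd_decomp: "\<exists>xs N. (\<forall>m. xs m \<in> grd HA m) \<and> x = (\<Sum>m<N. xs m)"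
    and grd_independent: "\<forall>m. xs m \<in> grd HA m \<Longrightarrow> (\<Sum>m<N. xs m) = 0 \<Longrightarrow> m < N \<Longrightarrow> xs m = 0"
    and cop_grd: "x \<in> grd HA n \<Longrightarrow> \<exists>ys. teq HA (cop HA x) ys \<and>
        (\<forall>(a, b)\<in>set ys. \<exists>i j. i + j = n \<and> a \<in> grd HA i \<and> b \<in> grd HA j)"

lemma graded_hopf_coalgebra_if_graded_connected_hopf:
  assumes "graded_connected_hopf HA"
  shows "graded_hopf_coalgebra HA"
proof -
  note ax = assms[unfolded graded_connected_hopf_def]
  have "hopf_coalgebra HA"
    by (rule hopf_coalgebra.intro) (use ax in simp_all)
  moreover have "graded_hopf_coalgebra_axioms HA"
    by (rule graded_hopf_coalgebra_axioms.intro) (use ax in simp_all)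
  ultimately show ?thesis
    using ax by (intro graded_hopf_coalgebra.intro) simp_all
qed

context graded_hopf_coalgebra
begin

lemma grd_decomp_finite: "\<exists>xs N. (\<forall>m. xs m \<in> grd HA m) \<and> (\<forall>m\<ge>N. xs m = 0) \<and> x = (\<Sum>m<N. xs m)"
proof -
  obtain xs N where xs: "\<forall>m. xs m \<in> grd HA m" and x: "x = (\<Sum>m<N. xs m)"
    using grd_decomp by blast
  define xs' where "xs' m = (if m < N then xs m else 0)" for m
  have "\<forall>m. xs' m \<in> grd HA m" using xs subspace_0[OF subspace_grd] by (simp add: xs'_def)
  moreover have "\<forall>m\<ge>N. xs' m = 0" by (simp add: xs'_def)
  moreover have "x = (\<Sum>m<N. xs' m)" unfolding x xs'_def by simp
  ultimately show ?thesis by blast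
qed

lemma grd_decomp_unique:
  assumes xs: "\<forall>m. xs m \<in> grd HA m" "\<forall>m\<ge>N. xs m = 0" "x = (\<Sum>m<N. xs m)"
    and ys: "\<forall>m. ys m \<in> grd HA m" "\<forall>m\<ge>M. ys m = 0" "x = (\<Sum>m<M. ys m)"
  shows "xs = ys"
proof
  fix n
  define K where "K = max N M"
  have "(\<Sum>m<K. xs m - ys m) = (\<Sum>m<K. xs m) - (\<Sum>m<K. ys m)" by (rule sum_subtractf)
  also have "\<dots> = 0"
    using sum_lessThan_extend[of N xs K] sum_lessThan_extend[of M ys K] xs ys by (simp add: K_def)
  finally have "n < K \<Longrightarrow> xs n - ys n = 0"
    using grd_independent[of "\<lambda>m. xs m - ys m"] xs(1) ys(1) subspace_diff[OF subspace_grd] by blast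
  then show "xs n = ys n" using xs(2) ys(2) by (cases "n < K") (auto simp: K_def)
qed

lemma hproj_unique:
  assumes "\<forall>m. xs m \<in> grd HA m" "\<forall>m\<ge>N. xs m = 0" "x = (\<Sum>m<N. xs m)"
  shows "hproj HA n x = xs n"
  unfolding hproj_def
proof (rule the_equality)
  show "\<exists>ys M. (\<forall>m. ys m \<in> grd HA m) \<and> (\<forall>m\<ge>M. ys m = 0) \<and> x = (\<Sum>m<M. ys m) \<and> xs n = ys n"
    using assms by blast
qed (use grd_decomp_unique[OF assms] in metis)

lemma hproj_in_grd: "hproj HA n x \<in> grd HA n"
  using grd_decomp_finite[of x] hproj_unique by metis

lemma hproj_decomp: "\<exists>N. (\<forall>m\<ge>N. hproj HA m x = 0) \<and> x = (\<Sum>m<N. hproj HA m x)"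
proof -
  obtain xs N where "\<forall>m. xs m \<in> grd HA m" "\<forall>m\<ge>N. xs m = 0" "x = (\<Sum>m<N. xs m)"
    using grd_decomp_finite by blast
  with hproj_unique[OF this] show ?thesis by auto
qed

lemma hproj_homogeneous: "x \<in> grd HA k \<Longrightarrow> hproj HA n x = (if n = k then x else 0)"
  by (rule hproj_unique[of "\<lambda>m. if m = k then x else 0" "Suc k"])
    (auto simp: subspace_0[OF subspace_grd])

lemma hproj_add: "hproj HA n (x + y) = hproj HA n x + hproj HA n y"
proof -
  obtain N where x: "\<forall>m\<ge>N. hproj HA m x = 0" "x = (\<Sum>m<N. hproj HA m x)"
    using hproj_decomp by blast
  obtain M where y: "\<forall>m\<ge>M. hproj HA m y = 0" "y = (\<Sum>m<M. hproj HA m y)"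
    using hproj_decomp by blast
  define K where "K = max N M"
  have "x + y = (\<Sum>m<K. hproj HA m x + hproj HA m y)"
    using sum_lessThan_extend[of N "\<lambda>m. hproj HA m x" K] sum_lessThan_extend[of M "\<lambda>m. hproj HA m y" K] x y
    by (simp add: K_def sum.distrib)
  then show ?thesis
    by (rule hproj_unique[rotated 2])
      (auto simp: x(1) y(1) K_def hproj_in_grd subspace_add[OF subspace_grd])
qed

lemma hproj_scl: "hproj HA n (scl HA c x) = scl HA c (hproj HA n x)"
proof -
  obtain N where x: "\<forall>m\<ge>N. hproj HA m x = 0" "x = (\<Sum>m<N. hproj HA m x)"
    using hproj_decomp by blast
  then have "scl HA c x = (\<Sum>m<N. scl HA c (hproj HA m x))"
    by (metis scale_sum_right)
  then show ?thesis
    by (rule hproj_unique[rotated 2]) (auto simp: x(1) hproj_in_grd subspace_scale[OF subspace_grd])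
qed

lemma lin_fun_comp: "lin_fun HA f \<Longrightarrow> lin_fun HA (comp HA f n)"
  by (simp add: lin_fun_def comp_def hproj_add hproj_scl)

lemma comp_homogeneous: "lin_fun HA f \<Longrightarrow> x \<in> grd HA k \<Longrightarrow> comp HA f n x = (if n = k then f x else 0)"
  by (simp add: comp_def hproj_homogeneous lin_fun_zero)

lemma comp_in_gdual:
  assumes "lin_fun HA f"
  shows "comp HA f n \<in> gdual HA"
proof -
  have "\<forall>m\<ge>Suc n. \<forall>x\<in>grd HA m. comp HA f n x = 0" using comp_homogeneous[OF assms] by simp
  then show ?thesis unfolding gdual_def using lin_fun_comp[OF assms] by blast
qed

lemma lin_fun_eq_if_eq_on_grd:
  assumes f: "lin_fun HA f" and g: "lin_fun HA g" and eq: "\<And>k x. x \<in> grd HA k \<Longrightarrow> f x = g x"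
  shows "f = g"
proof
  fix x
  obtain N where x: "x = (\<Sum>m<N. hproj HA m x)"
    using hproj_decomp by blast
  have "f x = (\<Sum>m<N. g (hproj HA m x))"
    by (subst x) (simp add: lin_fun_apply_sum[OF f] eq[OF hproj_in_grd])
  also have "\<dots> = g x"
    by (subst (2) x) (simp add: lin_fun_apply_sum[OF g])
  finally show "f x = g x" .
qed

lemma comp_conv:
  assumes f: "lin_fun HA f" and g: "lin_fun HA g"
  shows "comp HA (conv HA f g) n = (\<lambda>x. \<Sum>i\<le>n. conv HA (comp HA f i) (comp HA g (n - i)) x)"
proof (rule lin_fun_eq_if_eq_on_grd)
  show "lin_fun HA (comp HA (conv HA f g) n)"
    by (intro lin_fun_comp lin_fun_conv f g)
  show "lin_fun HA (\<lambda>x. \<Sum>i\<le>n. conv HA (comp HA f i) (comp HA g (n - i)) x)"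
    by (intro lin_fun_sum lin_fun_conv lin_fun_comp f g)
next
  fix k x assume x: "x \<in> grd HA k"
  obtain ys where t: "teq HA (cop HA x) ys"
    and ys: "\<forall>(a, b)\<in>set ys. \<exists>i j. i + j = k \<and> a \<in> grd HA i \<and> b \<in> grd HA j"
    using cop_grd[OF x] by blast
  have "(\<Sum>i\<le>n. conv HA (comp HA f i) (comp HA g (n - i)) x)
      = (\<Sum>(a, b)\<leftarrow>ys. \<Sum>i\<le>n. comp HA f i a * comp HA g (n - i) b)"
    using teval_eq_if_teq[OF t lin_fun_comp[OF f] lin_fun_comp[OF g]]
    by (simp add: conv_eq_teval teval_def sum_sum_list_pair_swap)
  \<comment> \<open>each tensor factor pair (a, b) is homogeneous of degrees i + j = k, so only the
    summand with i' = i survives, and only if n = k\<close>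
  also have "\<dots> = (\<Sum>(a, b)\<leftarrow>ys. if n = k then f a * g b else 0)"
  proof (rule sum_list_pair_cong)
    fix a b assume "(a, b) \<in> set ys"
    then obtain i j where ij: "i + j = k" "a \<in> grd HA i" "b \<in> grd HA j" using ys by blast
    have "(\<Sum>i'\<le>n. comp HA f i' a * comp HA g (n - i') b)
        = (\<Sum>i'\<le>n. if i' = i then (if n = k then f a * g b else 0) else 0)"
      by (rule sum.cong) (use ij in \<open>auto simp: comp_homogeneous[OF f] comp_homogeneous[OF g]\<close>)
    then show "(\<Sum>i'\<le>n. comp HA f i' a * comp HA g (n - i') b) = (if n = k then f a * g b else 0)"
      using ij by auto
  qed
  also have "\<dots> = (if n = k then conv HA f g x else 0)"
  proof (cases "n = k")
    case True
    then show ?thesis using teval_eq_if_teq[OF t f g] by (simp add: conv_eq_teval teval_def)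
  next
    case False
    then show ?thesis by (induction ys) auto
  qed
  also have "\<dots> = comp HA (conv HA f g) n x"
    by (simp add: comp_homogeneous[OF lin_fun_conv[OF f g] x])
  finally show "comp HA (conv HA f g) n x = (\<Sum>i\<le>n. conv HA (comp HA f i) (comp HA g (n - i)) x)"
    by simp
qed

lemma comp_conv_in_dual_ideal:
  assumes a: "lin_fun HA a" and d: "lin_fun HA d" and gen: "\<And>j. comp HA d j \<in> dual_ideal HA G"
  shows "comp HA (conv HA a d) n \<in> dual_ideal HA G" and "comp HA (conv HA d a) n \<in> dual_ideal HA G"
proof -
  show "comp HA (conv HA a d) n \<in> dual_ideal HA G"
    unfolding comp_conv[OF a d] by (intro dual_ideal_sum dual_ideal_conv_left comp_in_gdual a gen) simp
  show "comp HA (conv HA d a) n \<in> dual_ideal HA G"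
    unfolding comp_conv[OF d a] by (intro dual_ideal_sum dual_ideal_conv_right comp_in_gdual a gen) simp
qed

lemma Iideal_subset_if_diff_factors:
  assumes f': "lin_fun HA f'" and g': "lin_fun HA g'" and a: "lin_fun HA a"
    and factor: "(\<lambda>x. f x - g x) = conv HA a (\<lambda>x. f' x - g' x)
      \<or> (\<lambda>x. f x - g x) = conv HA (\<lambda>x. f' x - g' x) a"
  shows "Iideal HA f g \<subseteq> Iideal HA f' g'"
  unfolding Iideal_eq_dual_ideal_comp
proof (rule dual_ideal_subset, rule image_subsetI)
  fix n
  have "comp HA (\<lambda>x. f' x - g' x) j \<in> dual_ideal HA (range (comp HA (\<lambda>x. f' x - g' x)))" for j
    by (rule dual_ideal_generator) simp
  then show "comp HA (\<lambda>x. f x - g x) n \<in> dual_ideal HA (range (comp HA (\<lambda>x. f' x - g' x)))"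
    using factor comp_conv_in_dual_ideal[OF a lin_fun_diff[OF f' g']] by auto
qed

lemma Iideal_subset_if_quotients_eq:
  assumes f: "lin_fun HA f" and f': "lin_fun HA f'" and g: "character HA g" and g': "character HA g'"
    and quot: "conv HA (char_inv HA g) f = conv HA (char_inv HA g') f'
      \<or> conv HA f (char_inv HA g) = conv HA f' (char_inv HA g')"
  shows "Iideal HA f g \<subseteq> Iideal HA f' g'"
proof -
  have lg: "lin_fun HA g" "lin_fun HA (char_inv HA g)" and lg': "lin_fun HA g'" "lin_fun HA (char_inv HA g')"
    using g g' by (simp_all add: lin_fun_if_character lin_fun_char_inv)
  from quot show ?thesis
  proof
    assume "conv HA (char_inv HA g) f = conv HA (char_inv HA g') f'"
    then show ?thesis
      using diff_eq_conv_diff_if_left_quotients_eq[OF f f' g g']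
      by (intro Iideal_subset_if_diff_factors[OF f' lg'(1) lin_fun_conv[OF lg(1) lg'(2)]]) simp
  next
    assume "conv HA f (char_inv HA g) = conv HA f' (char_inv HA g')"
    then show ?thesis
      using diff_eq_conv_diff_if_right_quotients_eq[OF f f' g g']
      by (intro Iideal_subset_if_diff_factors[OF f' lg'(1) lin_fun_conv[OF lg'(2) lg(1)]]) simp
  qed
qed

end

theorem proposition5p5:
  fixes HA :: "('k::field, 'h::ab_group_add) hopf"
    and \<phi> \<phi>' \<psi> \<psi>' :: "'h \<Rightarrow> 'k"
  assumes "graded_connected_hopf HA"
    and "character HA \<phi>" and "character HA \<phi>'"
    and "character HA \<psi>" and "character HA \<psi>'"
    and "conv HA (char_inv HA \<psi>) \<phi> = conv HA (char_inv HA \<psi>') \<phi>'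
         \<or> conv HA \<phi> (char_inv HA \<psi>) = conv HA \<phi>' (char_inv HA \<psi>')"
  shows "Ssub HA \<phi> \<psi> = Ssub HA \<phi>' \<psi>' \<and> Iideal HA \<phi> \<psi> = Iideal HA \<phi>' \<psi>'"
proof -
  interpret graded_hopf_coalgebra HA
    using assms(1) by (rule graded_hopf_coalgebra_if_graded_connected_hopf)
  have lin: "lin_fun HA \<phi>" "lin_fun HA \<phi>'"
    using assms(2,3) by (simp_all add: lin_fun_if_character)
  have swapped: "conv HA (char_inv HA \<psi>') \<phi>' = conv HA (char_inv HA \<psi>) \<phi>
      \<or> conv HA \<phi>' (char_inv HA \<psi>') = conv HA \<phi> (char_inv HA \<psi>)"
    using assms(6) by auto
  have "Ssub HA \<phi> \<psi> = Ssub HA \<phi>' \<psi>'"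
    by (rule Ssub_eq_if_quotients_eq[OF lin assms(4,5,6)])
  moreover have "Iideal HA \<phi> \<psi> \<subseteq> Iideal HA \<phi>' \<psi>'"
    by (rule Iideal_subset_if_quotients_eq[OF lin assms(4,5,6)])
  moreover have "Iideal HA \<phi>' \<psi>' \<subseteq> Iideal HA \<phi> \<psi>"
    by (rule Iideal_subset_if_quotients_eq[OF lin(2,1) assms(5,4) swapped])
  ultimately show ?thesis by blast
qed

end
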